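(* Let $C<\infty$, let $(z_i)$ be a bimonotone basis of a Banach space, and let $(w_i)$ be a block basis of $(z_i)$ with $1\le\|w_i\|\le C$ for all $i$. Let $\mathcal{A}$ be the family of finite sets $F\subseteq\mathbb{N}$ such that $\|\sum_{i\in F}\pm w_i\|\le C$ for all choices of signs. Then there is a norm $|\cdot|$ on $[(w_i)]$ equivalent to the original norm such that $(w_i)$ is a normalized bimonotone basis for $|\cdot|$ and $|\sum_{i\in F}\pm w_i|=1$ for every $F\in\mathcal{A}$ and every choice of signs.
   Context: A basis is bimonotone if all its basis projections $P_{[m,n]}$ onto intervals of coordinates have norm at most $1$. $[(w_i)]$ denotes the closed linear span. *)

theory Defs
  imports "HOL-Analysis.Analysis"
begin

definition is_norm_on :: "'a::real_vector set \<Rightarrow> ('a \<Rightarrow> real) \<Rightarrow> bool" where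
  "is_norm_on Y N \<longleftrightarrow> subspace Y \<and>
     (\<forall>x\<in>Y. N x \<ge> 0 \<and> (N x = 0 \<longleftrightarrow> x = 0)) \<and>
     (\<forall>x\<in>Y. \<forall>y\<in>Y. N (x + y) \<le> N x + N y) \<and>
     (\<forall>x\<in>Y. \<forall>c. N (c *\<^sub>R x) = \<bar>c\<bar> * N x)"

definition equiv_norm_on :: "'a::real_normed_vector set \<Rightarrow> ('a \<Rightarrow> real) \<Rightarrow> bool" where
  "equiv_norm_on Y N \<longleftrightarrow> (\<exists>a b. a > 0 \<and> b > 0 \<and>
     (\<forall>y\<in>Y. a * norm y \<le> N y \<and> N y \<le> b * norm y))"

definition schauder_basis_wrt :: "('a::real_vector \<Rightarrow> real) \<Rightarrow> 'a set \<Rightarrow> (nat \<Rightarrow> 'a) \<Rightarrow> bool" where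
  "schauder_basis_wrt N Y w \<longleftrightarrow> (\<forall>i. w i \<in> Y) \<and>
     (\<forall>x\<in>Y. \<exists>!a::nat \<Rightarrow> real. (\<lambda>n. N ((\<Sum>i<n. a i *\<^sub>R w i) - x)) \<longlonglongrightarrow> 0)"

definition basis_coeff :: "('a::real_vector \<Rightarrow> real) \<Rightarrow> (nat \<Rightarrow> 'a) \<Rightarrow> 'a \<Rightarrow> nat \<Rightarrow> real" where
  "basis_coeff N w x = (THE a. (\<lambda>n. N ((\<Sum>i<n. a i *\<^sub>R w i) - x)) \<longlonglongrightarrow> 0)"

definition bimonotone_wrt :: "('a::real_vector \<Rightarrow> real) \<Rightarrow> 'a set \<Rightarrow> (nat \<Rightarrow> 'a) \<Rightarrow> bool" where
  "bimonotone_wrt N Y w \<longleftrightarrow> schauder_basis_wrt N Y w \<and>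
     (\<forall>x\<in>Y. \<forall>m n. N (\<Sum>i\<in>{m..n}. basis_coeff N w x i *\<^sub>R w i) \<le> N x)"

definition block_basis_of :: "(nat \<Rightarrow> 'a::real_vector) \<Rightarrow> (nat \<Rightarrow> 'a) \<Rightarrow> bool" where
  "block_basis_of w z \<longleftrightarrow> (\<exists>p::nat \<Rightarrow> nat. strict_mono p \<and>
     (\<forall>i. w i \<noteq> 0 \<and> (\<exists>c::nat \<Rightarrow> real. w i = (\<Sum>j\<in>{p i..<p (Suc i)}. c j *\<^sub>R z j))))"

definition sign_family :: "real \<Rightarrow> (nat \<Rightarrow> 'a::real_normed_vector) \<Rightarrow> nat set set" where
  "sign_family C w = {F. finite F \<and> F \<noteq> {} \<and>
     (\<forall>\<epsilon>::nat \<Rightarrow> real. (\<forall>i\<in>F. \<epsilon> i \<in> {-1, 1}) \<longrightarrow> norm (\<Sum>i\<in>F. \<epsilon> i *\<^sub>R w i) \<le> C)}"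

end

theory Submission
  imports Defs
begin

(* The blocks (w_i) of a bimonotone basis (z_i) form a bimonotone basis of their closed span Y:
   on Y the partial sums of the w-expansion are the partial sums of the z-expansion taken at the
   block boundaries, because both are bounded linear and agree on every w_k.  If e_k are the
   coordinate functionals of (w_i) on Y, bimonotonicity and 1 <= norm (w_k) give |e_k x| <= norm x,
   so  |x| = max (norm x / C) (sup_k |e_k x|)  is a norm on Y equivalent to the given one.
   Interval projections increase neither of the two terms, so (w_i) stays bimonotone; on a sign
   sum over F in A the first term is at most 1 and the second is exactly 1. *)

lemma subspace_closure:
  fixes S :: "'a::real_normed_vector set"
  assumes "subspace S"
  shows "subspace (closure S)"
  unfolding subspace_def
proof (intro conjI ballI allI)
  show "0 \<in> closure S"
    using assms closure_subset subspace_0 by blast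
next
  fix x y assume "x \<in> closure S" "y \<in> closure S"
  then obtain f g where f: "\<forall>n. f n \<in> S" "f \<longlonglongrightarrow> x" and g: "\<forall>n. g n \<in> S" "g \<longlonglongrightarrow> y"
    by (meson closure_sequential)
  have "\<forall>n. f n + g n \<in> S" using f g assms subspace_add by blast
  moreover have "(\<lambda>n. f n + g n) \<longlonglongrightarrow> x + y" using f g tendsto_add by blast
  ultimately show "x + y \<in> closure S" by (meson closure_sequential)
next
  fix c x assume "x \<in> closure S"
  then obtain f where f: "\<forall>n. f n \<in> S" "f \<longlonglongrightarrow> x"
    by (meson closure_sequential)
  have "\<forall>n. c *\<^sub>R f n \<in> S" using f assms subspace_scale by blast
  moreover have "(\<lambda>n. c *\<^sub>R f n) \<longlonglongrightarrow> c *\<^sub>R x" using f tendsto_scaleR tendsto_const by blast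
  ultimately show "c *\<^sub>R x \<in> closure S" by (meson closure_sequential)
qed

lemma bounded_linear_zero_on_closure_span:
  assumes "bounded_linear T" and "\<And>i. T (w i) = 0" and "x \<in> closure (span (range w))"
  shows "T x = 0"
proof (rule continuous_constant_on_closure[OF _ _ assms(3)])
  show "continuous_on (closure (span (range w))) T"
    using assms(1) by (simp add: linear_continuous_on)
  show "T y = 0" if "y \<in> span (range w)" for y
    using linear_eq_0_on_span[OF bounded_linear.linear[OF assms(1)] _ that] assms(2) by blast
qed

lemma equiv_norm_on_tendsto_zero_iff:
  assumes "equiv_norm_on Y N" and "\<And>n. f n \<in> Y"
  shows "(\<lambda>n. N (f n)) \<longlonglongrightarrow> 0 \<longleftrightarrow> f \<longlonglongrightarrow> 0"
proof -
  obtain a b where "a > 0" and lower: "\<And>n. a * norm (f n) \<le> N (f n)"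
    and upper: "\<And>n. N (f n) \<le> b * norm (f n)"
    using assms unfolding equiv_norm_on_def by blast
  show ?thesis
  proof
    assume "(\<lambda>n. N (f n)) \<longlonglongrightarrow> 0"
    then have "(\<lambda>n. N (f n) / a) \<longlonglongrightarrow> 0"
      by (rule tendsto_divide_zero)
    moreover have "norm (f n) \<le> N (f n) / a" for n
      using lower[of n] \<open>a > 0\<close> by (simp add: pos_le_divide_eq mult.commute)
    then have "\<forall>\<^sub>F n in sequentially. norm (f n) \<le> N (f n) / a"
      by simp
    ultimately show "f \<longlonglongrightarrow> 0"
      by (rule Lim_null_comparison[rotated])
  next
    assume "f \<longlonglongrightarrow> 0"
    then have "(\<lambda>n. b * norm (f n)) \<longlonglongrightarrow> 0"
      by (intro tendsto_mult_right_zero tendsto_norm_zero)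
    moreover have "norm (N (f n)) \<le> b * norm (f n)" for n
    proof -
      have "0 \<le> a * norm (f n)"
        using \<open>a > 0\<close> by simp
      then show ?thesis
        using lower[of n] upper[of n] by (simp add: abs_le_iff)
    qed
    then have "\<forall>\<^sub>F n in sequentially. norm (N (f n)) \<le> b * norm (f n)"
      by simp
    ultimately show "(\<lambda>n. N (f n)) \<longlonglongrightarrow> 0"
      by (rule Lim_null_comparison[rotated])
  qed
qed

lemma expansion_tendsto_equiv_norm_iff:
  assumes "subspace Y" and "equiv_norm_on Y N" and "\<forall>i. w i \<in> Y" and "x \<in> Y"
  shows "(\<lambda>n. N ((\<Sum>i<n. a i *\<^sub>R w i) - x)) \<longlonglongrightarrow> 0
    \<longleftrightarrow> (\<lambda>n. norm ((\<Sum>i<n. a i *\<^sub>R w i) - x)) \<longlonglongrightarrow> 0"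
proof -
  have "(\<Sum>i<n. a i *\<^sub>R w i) - x \<in> Y" for n
    using assms(1,3,4) by (intro subspace_diff subspace_sum subspace_scale) auto
  then show ?thesis
    using equiv_norm_on_tendsto_zero_iff[OF assms(2)] by (simp add: tendsto_norm_zero_iff)
qed

lemma schauder_basis_wrt_equiv_norm:
  assumes "subspace Y" and "equiv_norm_on Y N" and basis: "schauder_basis_wrt norm Y w"
  shows "schauder_basis_wrt N Y w"
    and "x \<in> Y \<Longrightarrow> basis_coeff N w x = basis_coeff norm w x"
proof -
  have "\<forall>i. w i \<in> Y"
    using basis unfolding schauder_basis_wrt_def by blast
  note iff = expansion_tendsto_equiv_norm_iff[OF assms(1,2) this]
  show "schauder_basis_wrt N Y w"
    using basis unfolding schauder_basis_wrt_def by (simp add: iff)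
  show "x \<in> Y \<Longrightarrow> basis_coeff N w x = basis_coeff norm w x"
    unfolding basis_coeff_def by (simp add: iff)
qed

locale norm_schauder_basis =
  fixes Y :: "'a::real_normed_vector set" and w :: "nat \<Rightarrow> 'a"
  assumes subspace: "subspace Y" and basis: "schauder_basis_wrt norm Y w"
begin

abbreviation coeff :: "'a \<Rightarrow> nat \<Rightarrow> real" where
  "coeff \<equiv> basis_coeff norm w"

lemma basis_mem: "w i \<in> Y"
  using basis unfolding schauder_basis_wrt_def by blast

lemma sum_basis_mem: "(\<Sum>i\<in>F. a i *\<^sub>R w i) \<in> Y"
  using subspace by (intro subspace_sum subspace_scale basis_mem)

lemma expansion_unique:
  "x \<in> Y \<Longrightarrow> \<exists>!a. (\<lambda>n. \<Sum>i<n. a i *\<^sub>R w i) \<longlonglongrightarrow> x"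
  using basis unfolding schauder_basis_wrt_def by (simp add: tendsto_norm_zero_iff LIM_zero_iff)

lemma coeff_eq_The: "coeff x = (THE a. (\<lambda>n. \<Sum>i<n. a i *\<^sub>R w i) \<longlonglongrightarrow> x)"
  unfolding basis_coeff_def by (simp add: tendsto_norm_zero_iff LIM_zero_iff)

lemma coeff_sums: "x \<in> Y \<Longrightarrow> (\<lambda>n. \<Sum>i<n. coeff x i *\<^sub>R w i) \<longlonglongrightarrow> x"
  unfolding coeff_eq_The by (rule theI'[OF expansion_unique])

lemma coeff_eqI: "x \<in> Y \<Longrightarrow> (\<lambda>n. \<Sum>i<n. a i *\<^sub>R w i) \<longlonglongrightarrow> x \<Longrightarrow> coeff x = a"
  unfolding coeff_eq_The by (rule the1_equality[OF expansion_unique])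

lemma coeff_add: "x \<in> Y \<Longrightarrow> y \<in> Y \<Longrightarrow> coeff (x + y) k = coeff x k + coeff y k"
proof -
  assume "x \<in> Y" "y \<in> Y"
  then have "(\<lambda>n. (\<Sum>i<n. coeff x i *\<^sub>R w i) + (\<Sum>i<n. coeff y i *\<^sub>R w i)) \<longlonglongrightarrow> x + y"
    by (intro tendsto_add coeff_sums)
  then have "coeff (x + y) = (\<lambda>i. coeff x i + coeff y i)"
    using \<open>x \<in> Y\<close> \<open>y \<in> Y\<close> subspace
    by (intro coeff_eqI) (auto simp: scaleR_add_left sum.distrib subspace_add)
  then show ?thesis by simp
qed

lemma coeff_scaleR: "x \<in> Y \<Longrightarrow> coeff (c *\<^sub>R x) k = c * coeff x k"
proof -
  assume "x \<in> Y"
  then have "(\<lambda>n. c *\<^sub>R (\<Sum>i<n. coeff x i *\<^sub>R w i)) \<longlonglongrightarrow> c *\<^sub>R x"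
    by (intro tendsto_scaleR tendsto_const coeff_sums)
  then have "coeff (c *\<^sub>R x) = (\<lambda>i. c * coeff x i)"
    using \<open>x \<in> Y\<close> subspace
    by (intro coeff_eqI) (auto simp: scaleR_sum_right subspace_scale)
  then show ?thesis by simp
qed

lemma coeff_sum_basis:
  assumes "finite F"
  shows "coeff (\<Sum>i\<in>F. a i *\<^sub>R w i) = (\<lambda>k. if k \<in> F then a k else 0)"
proof (rule coeff_eqI[OF sum_basis_mem], rule tendsto_eventually)
  obtain m where "F \<subseteq> {..<m}"
    using finite_nat_bounded[OF assms] by blast
  have "(\<Sum>i<n. (if i \<in> F then a i else 0) *\<^sub>R w i) = (\<Sum>i\<in>F. a i *\<^sub>R w i)" if "m \<le> n" for n
  proof -
    have "(\<Sum>i<n. (if i \<in> F then a i else 0) *\<^sub>R w i) = (\<Sum>i<n. if i \<in> F then a i *\<^sub>R w i else 0)"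
      by (rule sum.cong) auto
    also have "\<dots> = (\<Sum>i\<in>{..<n} \<inter> F. a i *\<^sub>R w i)"
      by (simp add: sum.inter_restrict)
    also have "{..<n} \<inter> F = F"
      using \<open>F \<subseteq> {..<m}\<close> that by auto
    finally show ?thesis .
  qed
  then show "\<forall>\<^sub>F n in sequentially. (\<Sum>i<n. (if i \<in> F then a i else 0) *\<^sub>R w i) = (\<Sum>i\<in>F. a i *\<^sub>R w i)"
    unfolding eventually_sequentially by blast
qed

lemma basis_nonzero: "w k \<noteq> 0"
proof
  assume "w k = 0"
  have "coeff (w k) k = 1"
    using coeff_sum_basis[of "{k}" "\<lambda>_. 1"] by simp
  moreover have "coeff 0 k = 0"
    using coeff_scaleR[OF subspace_0[OF subspace], of 0 k] by simp
  ultimately show False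
    using \<open>w k = 0\<close> by simp
qed

end

locale bimonotone_basis = norm_schauder_basis +
  assumes projection_le: "x \<in> Y \<Longrightarrow> norm (\<Sum>i\<in>{m..n}. coeff x i *\<^sub>R w i) \<le> norm x"
begin

lemma abs_coeff_mult_norm_le: "x \<in> Y \<Longrightarrow> \<bar>coeff x k\<bar> * norm (w k) \<le> norm x"
  using projection_le[of x k k] by simp

end

lemma bimonotone_basisI:
  "subspace Y \<Longrightarrow> bimonotone_wrt norm Y w \<Longrightarrow> bimonotone_basis Y w"
  unfolding bimonotone_wrt_def bimonotone_basis_def bimonotone_basis_axioms_def
    norm_schauder_basis_def by blast

locale seminormalized_bimonotone_basis = bimonotone_basis +
  fixes C :: real
  assumes basis_norm_bounds: "\<And>i. 1 \<le> norm (w i) \<and> norm (w i) \<le> C"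
begin

lemma C_pos: "0 < C"
  using basis_norm_bounds[of 0] by linarith

lemma abs_coeff_le_norm: "x \<in> Y \<Longrightarrow> \<bar>coeff x k\<bar> \<le> norm x"
  using abs_coeff_mult_norm_le[of x k] mult_left_mono[of 1 "norm (w k)" "\<bar>coeff x k\<bar>"]
    basis_norm_bounds[of k] by simp

definition renorm :: "'a \<Rightarrow> real" where
  "renorm x = max (norm x / C) (SUP k. \<bar>coeff x k\<bar>)"

lemma norm_div_le_renorm: "norm x / C \<le> renorm x"
  unfolding renorm_def by simp

lemma abs_coeff_le_renorm: "x \<in> Y \<Longrightarrow> \<bar>coeff x k\<bar> \<le> renorm x"
  unfolding renorm_def
  by (rule max.coboundedI2, rule cSUP_upper) (auto intro!: bdd_aboveI2 abs_coeff_le_norm)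

lemma renorm_leI: "norm x / C \<le> M \<Longrightarrow> (\<And>k. \<bar>coeff x k\<bar> \<le> M) \<Longrightarrow> renorm x \<le> M"
  unfolding renorm_def by (simp add: cSUP_least)

lemma renorm_nonneg: "0 \<le> renorm x"
  using norm_div_le_renorm[of x] C_pos by (meson divide_nonneg_pos norm_ge_zero order_trans)

lemma renorm_le_norm:
  assumes "x \<in> Y"
  shows "renorm x \<le> (1 + 1 / C) * norm x"
proof (rule renorm_leI)
  have "0 \<le> norm x / C"
    using C_pos by simp
  moreover have eq: "(1 + 1 / C) * norm x = norm x + norm x / C"
    by (simp add: distrib_right)
  ultimately show "norm x / C \<le> (1 + 1 / C) * norm x"
    by simp
  show "\<bar>coeff x k\<bar> \<le> (1 + 1 / C) * norm x" for k
    using abs_coeff_le_norm[OF assms, of k] \<open>0 \<le> norm x / C\<close> unfolding eq by linarith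
qed

lemma renorm_triangle:
  assumes "x \<in> Y" and "y \<in> Y"
  shows "renorm (x + y) \<le> renorm x + renorm y"
proof (rule renorm_leI)
  have "norm (x + y) / C \<le> norm x / C + norm y / C"
    using norm_triangle_ineq[of x y] C_pos by (simp add: divide_right_mono flip: add_divide_distrib)
  then show "norm (x + y) / C \<le> renorm x + renorm y"
    using norm_div_le_renorm[of x] norm_div_le_renorm[of y] by linarith
  show "\<bar>coeff (x + y) k\<bar> \<le> renorm x + renorm y" for k
    using coeff_add[OF assms, of k] abs_triangle_ineq[of "coeff x k" "coeff y k"]
      abs_coeff_le_renorm[OF assms(1), of k] abs_coeff_le_renorm[OF assms(2), of k] by linarith
qed

lemma renorm_scaleR_le:
  assumes "x \<in> Y"
  shows "renorm (c *\<^sub>R x) \<le> \<bar>c\<bar> * renorm x"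
proof (rule renorm_leI)
  show "norm (c *\<^sub>R x) / C \<le> \<bar>c\<bar> * renorm x"
    using mult_left_mono[OF norm_div_le_renorm[of x], of "\<bar>c\<bar>"] by simp
  show "\<bar>coeff (c *\<^sub>R x) k\<bar> \<le> \<bar>c\<bar> * renorm x" for k
    using mult_left_mono[OF abs_coeff_le_renorm[OF assms, of k], of "\<bar>c\<bar>"]
    by (simp add: coeff_scaleR[OF assms] abs_mult)
qed

lemma renorm_scaleR:
  assumes "x \<in> Y"
  shows "renorm (c *\<^sub>R x) = \<bar>c\<bar> * renorm x"
proof (cases "c = 0")
  case True
  then show ?thesis
    using renorm_scaleR_le[OF assms, of 0] renorm_nonneg[of 0] by simp
next
  case False
  have "c *\<^sub>R x \<in> Y"
    using subspace assms by (rule subspace_scale)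
  have "renorm x = renorm (inverse c *\<^sub>R (c *\<^sub>R x))"
    using False by simp
  also have "\<dots> \<le> \<bar>inverse c\<bar> * renorm (c *\<^sub>R x)"
    by (rule renorm_scaleR_le[OF \<open>c *\<^sub>R x \<in> Y\<close>])
  finally have "\<bar>c\<bar> * renorm x \<le> \<bar>c\<bar> * (\<bar>inverse c\<bar> * renorm (c *\<^sub>R x))"
    by (rule mult_left_mono) simp
  also have "\<dots> = renorm (c *\<^sub>R x)"
    using False by (simp add: abs_inverse)
  finally show ?thesis
    using renorm_scaleR_le[OF assms, of c] by linarith
qed

lemma renorm_eq_0_iff: "x \<in> Y \<Longrightarrow> renorm x = 0 \<longleftrightarrow> x = 0"
proof
  assume "renorm x = 0"
  then have "norm x / C \<le> 0"
    using norm_div_le_renorm[of x] by simp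
  then show "x = 0"
    using C_pos by (simp add: divide_le_0_iff)
next
  show "x = 0 \<Longrightarrow> renorm x = 0"
    using renorm_scaleR[OF subspace_0[OF subspace], of 0] by simp
qed

lemma is_norm_on_renorm: "is_norm_on Y renorm"
  unfolding is_norm_on_def
  using subspace by (simp add: renorm_nonneg renorm_eq_0_iff renorm_triangle renorm_scaleR)

lemma equiv_norm_on_renorm: "equiv_norm_on Y renorm"
  unfolding equiv_norm_on_def
proof (intro exI conjI ballI)
  show "0 < 1 / C"
    using C_pos by simp
  then show "0 < 1 + 1 / C"
    by linarith
  fix y assume "y \<in> Y"
  show "1 / C * norm y \<le> renorm y"
    using norm_div_le_renorm[of y] by simp
  show "renorm y \<le> (1 + 1 / C) * norm y"
    using renorm_le_norm[OF \<open>y \<in> Y\<close>] .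
qed

lemma bimonotone_wrt_renorm: "bimonotone_wrt renorm Y w"
  unfolding bimonotone_wrt_def
proof (intro conjI ballI allI)
  show "schauder_basis_wrt renorm Y w"
    by (rule schauder_basis_wrt_equiv_norm(1)[OF subspace equiv_norm_on_renorm basis])
  fix x m n assume x: "x \<in> Y"
  show "renorm (\<Sum>i\<in>{m..n}. basis_coeff renorm w x i *\<^sub>R w i) \<le> renorm x"
    unfolding schauder_basis_wrt_equiv_norm(2)[OF subspace equiv_norm_on_renorm basis x]
  proof (rule renorm_leI)
    show "norm (\<Sum>i\<in>{m..n}. coeff x i *\<^sub>R w i) / C \<le> renorm x"
      using projection_le[OF x, of m n] norm_div_le_renorm[of x] C_pos
      by (meson divide_right_mono less_imp_le order_trans)
    show "\<bar>coeff (\<Sum>i\<in>{m..n}. coeff x i *\<^sub>R w i) k\<bar> \<le> renorm x" for k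
      using abs_coeff_le_renorm[OF x, of k] renorm_nonneg[of x] by (simp add: coeff_sum_basis)
  qed
qed

lemma renorm_sum_basis_eq_1:
  assumes "finite F" and "norm (\<Sum>i\<in>F. a i *\<^sub>R w i) \<le> C"
    and "\<forall>i\<in>F. \<bar>a i\<bar> \<le> 1" and "j \<in> F" and "\<bar>a j\<bar> = 1"
  shows "renorm (\<Sum>i\<in>F. a i *\<^sub>R w i) = 1"
proof (rule antisym)
  show "renorm (\<Sum>i\<in>F. a i *\<^sub>R w i) \<le> 1"
  proof (rule renorm_leI)
    show "norm (\<Sum>i\<in>F. a i *\<^sub>R w i) / C \<le> 1"
      using assms(2) C_pos by simp
    show "\<bar>coeff (\<Sum>i\<in>F. a i *\<^sub>R w i) k\<bar> \<le> 1" for k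
      using assms(3) by (simp add: coeff_sum_basis[OF assms(1)])
  qed
  show "1 \<le> renorm (\<Sum>i\<in>F. a i *\<^sub>R w i)"
    using abs_coeff_le_renorm[OF sum_basis_mem, of a F j] assms(1,4,5)
    by (simp add: coeff_sum_basis)
qed

lemma renorm_basis: "renorm (w i) = 1"
  using renorm_sum_basis_eq_1[of "{i}" "\<lambda>_. 1" i] basis_norm_bounds[of i] by simp

lemma renorm_sign_sum:
  assumes "F \<in> sign_family C w" and "\<forall>i\<in>F. \<epsilon> i \<in> {-1, 1}"
  shows "renorm (\<Sum>i\<in>F. \<epsilon> i *\<^sub>R w i) = 1"
proof -
  have "finite F" "F \<noteq> {}" "norm (\<Sum>i\<in>F. \<epsilon> i *\<^sub>R w i) \<le> C"
    using assms unfolding sign_family_def by auto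
  moreover obtain j where "j \<in> F"
    using \<open>F \<noteq> {}\<close> by blast
  ultimately show ?thesis
    using assms(2) by (intro renorm_sum_basis_eq_1[of F \<epsilon> j]) auto
qed

end

locale block_basis = z: bimonotone_basis UNIV z
  for z :: "nat \<Rightarrow> 'a::real_normed_vector" +
  fixes w :: "nat \<Rightarrow> 'a" and p :: "nat \<Rightarrow> nat" and c :: "nat \<Rightarrow> nat \<Rightarrow> real"
  assumes strict_mono: "strict_mono p"
    and block_eq: "\<And>i. w i = (\<Sum>j\<in>{p i..<p (Suc i)}. c i j *\<^sub>R z j)"
    and block_nonzero: "\<And>i. w i \<noteq> 0"
begin

abbreviation Y :: "'a set" where
  "Y \<equiv> closure (span (range w))"

lemma z_coeff_bounded_linear: "bounded_linear (\<lambda>x. z.coeff x j)"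
proof (rule bounded_linear_intro[where K = "1 / norm (z j)"])
  show "z.coeff (x + y) j = z.coeff x j + z.coeff y j" for x y
    by (simp add: z.coeff_add)
  show "z.coeff (r *\<^sub>R x) j = r *\<^sub>R z.coeff x j" for r x
    by (simp add: z.coeff_scaleR)
  have "0 < norm (z j)"
    using z.basis_nonzero[of j] by simp
  then show "norm (z.coeff x j) \<le> norm x * (1 / norm (z j))" for x
    using z.abs_coeff_mult_norm_le[of x j] by (simp add: pos_le_divide_eq)
qed

lemma z_coeff_block: "z.coeff (w i) = (\<lambda>j. if j \<in> {p i..<p (Suc i)} then c i j else 0)"
  unfolding block_eq by (rule z.coeff_sum_basis) simp

definition partial_sum :: "nat \<Rightarrow> 'a \<Rightarrow> 'a" where
  "partial_sum k x = (\<Sum>j<k. z.coeff x j *\<^sub>R z j)"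

lemma partial_sum_bounded_linear: "bounded_linear (partial_sum k)"
  unfolding partial_sum_def
  by (intro bounded_linear_sum bounded_linear_compose[OF bounded_linear_scaleR_left z_coeff_bounded_linear])

lemma partial_sum_block: "partial_sum (p n) (w i) = (if i < n then w i else 0)"
proof -
  have "partial_sum (p n) (w i) = (\<Sum>j<p n. if j \<in> {p i..<p (Suc i)} then c i j *\<^sub>R z j else 0)"
    unfolding partial_sum_def z_coeff_block by (rule sum.cong) auto
  also have "\<dots> = (\<Sum>j\<in>{..<p n} \<inter> {p i..<p (Suc i)}. c i j *\<^sub>R z j)"
    by (simp add: sum.inter_restrict)
  also have "\<dots> = (if i < n then w i else 0)"
  proof (cases "i < n")
    case True
    then have "p (Suc i) \<le> p n"
      by (intro strict_mono_leD[OF strict_mono]) simp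
    then have "{..<p n} \<inter> {p i..<p (Suc i)} = {p i..<p (Suc i)}"
      by auto
    then show ?thesis
      using True block_eq by simp
  next
    case False
    then have "p n \<le> p i"
      by (intro strict_mono_leD[OF strict_mono]) simp
    then have "{..<p n} \<inter> {p i..<p (Suc i)} = {}"
      by auto
    then show ?thesis
      using False by simp
  qed
  finally show ?thesis .
qed

definition pivot :: "nat \<Rightarrow> nat" where
  "pivot i = (SOME j. j \<in> {p i..<p (Suc i)} \<and> c i j \<noteq> 0)"

lemma pivot: "pivot i \<in> {p i..<p (Suc i)} \<and> c i (pivot i) \<noteq> 0"
proof -
  have "\<exists>j. j \<in> {p i..<p (Suc i)} \<and> c i j \<noteq> 0"
  proof (rule ccontr)
    assume "\<nexists>j. j \<in> {p i..<p (Suc i)} \<and> c i j \<noteq> 0"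
    then have "w i = 0"
      unfolding block_eq[of i] by (intro sum.neutral) auto
    then show False
      using block_nonzero by blast
  qed
  then show ?thesis
    unfolding pivot_def by (rule someI_ex)
qed

lemma blocks_disjoint:
  assumes "j \<in> {p i..<p (Suc i)}" and "j \<in> {p k..<p (Suc k)}"
  shows "i = k"
proof (rule ccontr)
  assume "i \<noteq> k"
  then consider "Suc i \<le> k" | "Suc k \<le> i"
    by linarith
  then show False
  proof cases
    case 1
    then have "p (Suc i) \<le> p k"
      by (rule strict_mono_leD[OF strict_mono])
    then show False
      using assms by simp
  next
    case 2
    then have "p (Suc k) \<le> p i"
      by (rule strict_mono_leD[OF strict_mono])
    then show False
      using assms by simp
  qed
qed

definition coord :: "nat \<Rightarrow> 'a \<Rightarrow> real" where
  "coord i x = z.coeff x (pivot i) / c i (pivot i)"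

lemma coord_bounded_linear: "bounded_linear (coord i)"
  unfolding coord_def by (rule bounded_linear_compose[OF bounded_linear_divide z_coeff_bounded_linear])

lemma coord_block: "coord k (w i) = (if k = i then 1 else 0)"
  unfolding coord_def z_coeff_block using pivot[of k] blocks_disjoint[of "pivot k" i k] by auto

lemma coord_sum_block:
  assumes "finite A"
  shows "coord k (\<Sum>i\<in>A. a i *\<^sub>R w i) = (if k \<in> A then a k else 0)"
proof -
  have lin: "linear (coord k)"
    using coord_bounded_linear bounded_linear.linear by blast
  have "coord k (\<Sum>i\<in>A. a i *\<^sub>R w i) = (\<Sum>i\<in>A. a i * coord k (w i))"
    by (simp add: linear_sum[OF lin] linear_scale[OF lin])
  also have "\<dots> = (\<Sum>i\<in>A. if k = i then a i else 0)"
    by (rule sum.cong) (auto simp: coord_block)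
  also have "\<dots> = (if k \<in> A then a k else 0)"
    using assms by simp
  finally show ?thesis .
qed

lemma coord_expansion:
  assumes "x \<in> Y"
  shows "(\<Sum>i<n. coord i x *\<^sub>R w i) = partial_sum (p n) x"
proof -
  let ?T = "\<lambda>x. (\<Sum>i<n. coord i x *\<^sub>R w i) - partial_sum (p n) x"
  have T: "bounded_linear ?T"
    by (intro bounded_linear_sub bounded_linear_sum partial_sum_bounded_linear
        bounded_linear_compose[OF bounded_linear_scaleR_left coord_bounded_linear])
  have "?T (w k) = 0" for k
  proof -
    have "(\<Sum>i<n. coord i (w k) *\<^sub>R w i) = (\<Sum>i<n. if i = k then w i else 0)"
      by (rule sum.cong) (auto simp: coord_block)
    then show ?thesis
      by (simp add: partial_sum_block)
  qed
  then have "?T x = 0"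
    by (rule bounded_linear_zero_on_closure_span[OF T _ assms])
  then show ?thesis
    by simp
qed

lemma coord_sums:
  assumes "x \<in> Y"
  shows "(\<lambda>n. \<Sum>i<n. coord i x *\<^sub>R w i) \<longlonglongrightarrow> x"
proof -
  have "(\<lambda>k. partial_sum k x) \<longlonglongrightarrow> x"
    unfolding partial_sum_def by (rule z.coeff_sums) simp
  then have "((\<lambda>k. partial_sum k x) \<circ> p) \<longlonglongrightarrow> x"
    by (rule LIMSEQ_subseq_LIMSEQ[OF _ strict_mono])
  then show ?thesis
    using coord_expansion[OF assms] by (simp add: o_def)
qed

lemma coord_eqI:
  assumes "(\<lambda>n. \<Sum>i<n. a i *\<^sub>R w i) \<longlonglongrightarrow> x"
  shows "coord k x = a k"
proof (rule LIMSEQ_unique)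
  show "(\<lambda>n. coord k (\<Sum>i<n. a i *\<^sub>R w i)) \<longlonglongrightarrow> coord k x"
    using bounded_linear.tendsto[OF coord_bounded_linear assms] .
  have "\<forall>n\<ge>Suc k. coord k (\<Sum>i<n. a i *\<^sub>R w i) = a k"
    by (auto simp: coord_sum_block)
  then show "(\<lambda>n. coord k (\<Sum>i<n. a i *\<^sub>R w i)) \<longlonglongrightarrow> a k"
    by (intro tendsto_eventually) (auto simp: eventually_sequentially)
qed

lemma schauder_basis: "schauder_basis_wrt norm Y w"
  unfolding schauder_basis_wrt_def
proof (intro conjI allI ballI)
  show "w i \<in> Y" for i
    using closure_subset[of "span (range w)"] span_base[of "w i" "range w"] by blast
  fix x assume "x \<in> Y"
  show "\<exists>!a. (\<lambda>n. norm ((\<Sum>i<n. a i *\<^sub>R w i) - x)) \<longlonglongrightarrow> 0"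
  proof (rule ex1I[of _ "\<lambda>i. coord i x"])
    show "(\<lambda>n. norm ((\<Sum>i<n. coord i x *\<^sub>R w i) - x)) \<longlonglongrightarrow> 0"
      using coord_sums[OF \<open>x \<in> Y\<close>] by (simp add: tendsto_norm_zero_iff LIM_zero_iff)
    fix a assume "(\<lambda>n. norm ((\<Sum>i<n. a i *\<^sub>R w i) - x)) \<longlonglongrightarrow> 0"
    then have "(\<lambda>n. \<Sum>i<n. a i *\<^sub>R w i) \<longlonglongrightarrow> x"
      by (simp add: tendsto_norm_zero_iff LIM_zero_iff)
    from coord_eqI[OF this] show "a = (\<lambda>i. coord i x)"
      by (intro ext) simp
  qed
qed

sublocale w: norm_schauder_basis Y w
  by unfold_locales (simp_all add: subspace_closure schauder_basis)

lemma projection_eq_block: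
  assumes "x \<in> Y" and "m \<le> n"
  shows "(\<Sum>i\<in>{m..n}. w.coeff x i *\<^sub>R w i) = (\<Sum>j\<in>{p m..<p (Suc n)}. z.coeff x j *\<^sub>R z j)"
proof -
  have ivl: "sum f {a..<b} = sum f {..<b} - sum f {..<a}" if "a \<le> b" for f :: "nat \<Rightarrow> 'a" and a b
    using sum_diff_nat_ivl[of 0 a b f] that by (simp add: atLeast0LessThan)
  have "p m \<le> p (Suc n)"
    using assms(2) by (intro strict_mono_leD[OF strict_mono]) simp
  have "w.coeff x = (\<lambda>i. coord i x)"
    using w.coeff_eqI[OF assms(1) coord_sums[OF assms(1)]] .
  then have "(\<Sum>i\<in>{m..n}. w.coeff x i *\<^sub>R w i) = (\<Sum>i\<in>{m..<Suc n}. coord i x *\<^sub>R w i)"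
    by (simp add: atLeastLessThanSuc_atLeastAtMost)
  also have "\<dots> = (\<Sum>i<Suc n. coord i x *\<^sub>R w i) - (\<Sum>i<m. coord i x *\<^sub>R w i)"
    using assms(2) by (intro ivl) simp
  also have "\<dots> = partial_sum (p (Suc n)) x - partial_sum (p m) x"
    by (simp only: coord_expansion[OF assms(1)])
  also have "\<dots> = (\<Sum>j\<in>{p m..<p (Suc n)}. z.coeff x j *\<^sub>R z j)"
    unfolding partial_sum_def using \<open>p m \<le> p (Suc n)\<close> by (simp add: ivl)
  finally show ?thesis .
qed

lemma bimonotone: "bimonotone_wrt norm Y w"
  unfolding bimonotone_wrt_def
proof (intro conjI ballI allI)
  show "schauder_basis_wrt norm Y w"
    by (rule schauder_basis)
  fix x m n assume "x \<in> Y"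
  show "norm (\<Sum>i\<in>{m..n}. w.coeff x i *\<^sub>R w i) \<le> norm x"
  proof (cases "m \<le> n")
    case True
    have "p m < p (Suc n)"
      using True strict_mono by (simp add: strict_mono_less)
    then have "{p m..<p (Suc n)} = {p m..p (Suc n) - 1}"
      by auto
    then have "norm (\<Sum>i\<in>{m..n}. w.coeff x i *\<^sub>R w i)
        = norm (\<Sum>j\<in>{p m..p (Suc n) - 1}. z.coeff x j *\<^sub>R z j)"
      unfolding projection_eq_block[OF \<open>x \<in> Y\<close> True] by (simp only:)
    also have "\<dots> \<le> norm x"
      by (rule z.projection_le) simp
    finally show ?thesis .
  next
    case False
    then show ?thesis
      by simp
  qed
qed

end

lemma bimonotone_wrt_block_basis:
  assumes "bimonotone_wrt norm UNIV z" and "block_basis_of w z"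
  shows "bimonotone_wrt norm (closure (span (range w))) w"
proof -
  obtain p where "strict_mono p"
    and blocks: "\<forall>i. w i \<noteq> 0 \<and> (\<exists>c. w i = (\<Sum>j\<in>{p i..<p (Suc i)}. c j *\<^sub>R z j))"
    using assms(2) unfolding block_basis_of_def by blast
  have "\<exists>c. \<forall>i. w i = (\<Sum>j\<in>{p i..<p (Suc i)}. c i j *\<^sub>R z j)"
    by (rule choice) (use blocks in blast)
  then obtain c where block_eq: "\<forall>i. w i = (\<Sum>j\<in>{p i..<p (Suc i)}. c i j *\<^sub>R z j)"
    by blast
  have "block_basis z w p c"
  proof (intro block_basis.intro block_basis_axioms.intro)
    show "bimonotone_basis UNIV z"
      by (rule bimonotone_basisI[OF subspace_UNIV assms(1)])
    show "strict_mono p"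
      by fact
    show "w i = (\<Sum>j\<in>{p i..<p (Suc i)}. c i j *\<^sub>R z j)" "w i \<noteq> 0" for i
      using block_eq blocks by blast+
  qed
  then interpret block_basis z w p c .
  show ?thesis
    by (rule bimonotone)
qed

theorem mainTheorem9:
  fixes z w :: "nat \<Rightarrow> 'a::banach" and C :: real
  assumes "bimonotone_wrt norm UNIV z"
    and "block_basis_of w z"
    and "\<And>i. 1 \<le> norm (w i) \<and> norm (w i) \<le> C"
  shows "\<exists>N :: 'a \<Rightarrow> real.
           is_norm_on (closure (span (range w))) N \<and>
           equiv_norm_on (closure (span (range w))) N \<and>
           bimonotone_wrt N (closure (span (range w))) w \<and>
           (\<forall>i. N (w i) = 1) \<and>
           (\<forall>F\<in>sign_family C w. \<forall>\<epsilon>::nat \<Rightarrow> real. (\<forall>i\<in>F. \<epsilon> i \<in> {-1, 1}) \<longrightarrow>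
              N (\<Sum>i\<in>F. \<epsilon> i *\<^sub>R w i) = 1)"
proof -
  interpret seminormalized_bimonotone_basis "closure (span (range w))" w C
    by (intro seminormalized_bimonotone_basis.intro seminormalized_bimonotone_basis_axioms.intro
        bimonotone_basisI subspace_closure subspace_span bimonotone_wrt_block_basis[OF assms(1,2)] assms(3))
  show ?thesis
    by (intro exI[of _ renorm] conjI allI ballI impI)
      (simp_all add: is_norm_on_renorm equiv_norm_on_renorm bimonotone_wrt_renorm renorm_basis
        renorm_sign_sum)
qed

end
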